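(* Consider the Bayesian setting described in the context. For any deterministic auction that satisfies (VP), (NPT), and (IC) ex-post (where bidders may misreport their valuation arbitrarily and their budget only downward), together with the budget constraints $P_i(\vec v,\vec b)\le b_i$ and the size constraints $x_i(\vec v,\vec b)\le\kappa_i$, the interim quantities $x_{ikm}$ and $P_{ikm}$ of the auction form a feasible solution of the linear program below. In particular, the optimal LP value is an upper bound on the expected revenue of the revenue-maximizing such auction. LP: maximize $\sum_{i,k,m}f_{ikm}P_{ikm}$ subject to $\sum_{i,k,m}f_{ikm}x_{ikm}\le1$; $s_kx_{ikm}-P_{ikm}\ge s_kx_{ilt}-P_{ilt}$ for all $i,k,l$ and all $t<m$; $s_kx_{ikm}-P_{ikm}\ge0$ for all $i,k,m$; $P_{ikm}\in[0,\beta_m]$ and $x_{ikm}\in[0,\kappa_i]$ for all $i,k,m$.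
   Context: There are $n$ bidders and one unit of an infinitely divisible good. Bidder $i$ has a private valuation per unit taking values in $0=s_0\le s_1<s_2<\dots<s_K$, a private budget taking values in $0=\beta_0\le\beta_1<\dots<\beta_M$, and a public size constraint $\kappa_i$ (the maximum amount it wants). The auctioneer knows independent (across bidders) distributions $f_{ikm}=\Pr[v_i=s_k\text{ and }b_i=\beta_m]$. A deterministic auction maps reported $(\vec v,\vec b)$ to allocations $x_i(\vec v,\vec b)$ and prices $P_i(\vec v,\vec b)$, with $\sum_ix_i\le1$. A bidder's utility is $-\infty$ if the price exceeds the true budget and (true valuation)$\times$(allocation) minus price otherwise. (VP): truthful reporting gives nonnegative utility; (NPT): prices are nonnegative; (IC): truthful reporting maximizes utility, for every report of the other bidders. The interim quantities are $x_{ikm}=\mathbb E_{\vec v_{-i},\vec b_{-i}}[x_i(s_k,\beta_m,\vec v_{-i},\vec b_{-i})]$ and $P_{ikm}=\mathbb E_{\vec v_{-i},\vec b_{-i}}[P_i(s_k,\beta_m,\vec v_{-i},\vec b_{-i})]$, where the other bidders' reports are drawn from their distributions. Expected revenue is $\mathbb E[\sum_iP_i(\vec v,\vec b)]$ with $(\vec v,\vec b)$ drawn from the distributions. *)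

theory Defs
  imports Complex_Main "HOL-Library.Extended_Real" "HOL-Library.FuncSet"
begin

text \<open>Bidders are 0..<n. A type of bidder i is a pair (k,m) of indices, meaning valuation s k
  (k \<le> K) and budget beta m (m \<le> M). A report profile assigns a type to each bidder.\<close>

type_synonym profile = "nat \<Rightarrow> nat \<times> nat"

definition types :: "nat \<Rightarrow> nat \<Rightarrow> (nat \<times> nat) set" where
  "types K M = {..K} \<times> {..M}"

definition profiles :: "nat \<Rightarrow> nat \<Rightarrow> nat \<Rightarrow> profile set" where
  "profiles n K M = PiE {..<n} (\<lambda>_. types K M)"

definition others :: "nat \<Rightarrow> nat \<Rightarrow> nat \<Rightarrow> nat \<Rightarrow> profile set" where
  "others n K M i = PiE ({..<n} - {i}) (\<lambda>_. types K M)"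

definition prof_prob :: "(nat \<Rightarrow> nat \<Rightarrow> nat \<Rightarrow> real) \<Rightarrow> nat set \<Rightarrow> profile \<Rightarrow> real" where
  "prof_prob f I q = (\<Prod>j\<in>I. f j (fst (q j)) (snd (q j)))"

definition utility :: "(nat \<Rightarrow> real) \<Rightarrow> (nat \<Rightarrow> real) \<Rightarrow> nat \<Rightarrow> nat \<Rightarrow> real \<Rightarrow> real \<Rightarrow> ereal" where
  "utility s beta k m a p = (if p > beta m then -\<infinity> else ereal (s k * a - p))"

definition interim :: "nat \<Rightarrow> nat \<Rightarrow> nat \<Rightarrow> (nat \<Rightarrow> nat \<Rightarrow> nat \<Rightarrow> real)
    \<Rightarrow> (nat \<Rightarrow> profile \<Rightarrow> real) \<Rightarrow> nat \<Rightarrow> nat \<Rightarrow> nat \<Rightarrow> real" where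
  "interim n K M f g i k m =
     (\<Sum>q\<in>others n K M i. prof_prob f ({..<n} - {i}) q * g i (q(i := (k, m))))"

definition expected_revenue :: "nat \<Rightarrow> nat \<Rightarrow> nat \<Rightarrow> (nat \<Rightarrow> nat \<Rightarrow> nat \<Rightarrow> real)
    \<Rightarrow> (nat \<Rightarrow> profile \<Rightarrow> real) \<Rightarrow> real" where
  "expected_revenue n K M f P =
     (\<Sum>p\<in>profiles n K M. prof_prob f {..<n} p * (\<Sum>i<n. P i p))"

definition lp_objective :: "nat \<Rightarrow> nat \<Rightarrow> nat \<Rightarrow> (nat \<Rightarrow> nat \<Rightarrow> nat \<Rightarrow> real)
    \<Rightarrow> (nat \<Rightarrow> nat \<Rightarrow> nat \<Rightarrow> real) \<Rightarrow> real" where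
  "lp_objective n K M f Q = (\<Sum>i<n. \<Sum>k\<le>K. \<Sum>m\<le>M. f i k m * Q i k m)"

definition lp_feasible :: "nat \<Rightarrow> nat \<Rightarrow> nat \<Rightarrow> (nat \<Rightarrow> real) \<Rightarrow> (nat \<Rightarrow> real) \<Rightarrow> (nat \<Rightarrow> real)
    \<Rightarrow> (nat \<Rightarrow> nat \<Rightarrow> nat \<Rightarrow> real) \<Rightarrow> (nat \<Rightarrow> nat \<Rightarrow> nat \<Rightarrow> real)
    \<Rightarrow> (nat \<Rightarrow> nat \<Rightarrow> nat \<Rightarrow> real) \<Rightarrow> bool" where
  "lp_feasible n K M s beta kappa f X Q \<longleftrightarrow>
     (\<Sum>i<n. \<Sum>k\<le>K. \<Sum>m\<le>M. f i k m * X i k m) \<le> 1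
   \<and> (\<forall>i<n. \<forall>k\<le>K. \<forall>l\<le>K. \<forall>m\<le>M. \<forall>t<m.
        s k * X i k m - Q i k m \<ge> s k * X i l t - Q i l t)
   \<and> (\<forall>i<n. \<forall>k\<le>K. \<forall>m\<le>M. s k * X i k m - Q i k m \<ge> 0)
   \<and> (\<forall>i<n. \<forall>k\<le>K. \<forall>m\<le>M. 0 \<le> Q i k m \<and> Q i k m \<le> beta m)
   \<and> (\<forall>i<n. \<forall>k\<le>K. \<forall>m\<le>M. 0 \<le> X i k m \<and> X i k m \<le> kappa i)"

definition lp_value :: "nat \<Rightarrow> nat \<Rightarrow> nat \<Rightarrow> (nat \<Rightarrow> real) \<Rightarrow> (nat \<Rightarrow> real) \<Rightarrow> (nat \<Rightarrow> real)
    \<Rightarrow> (nat \<Rightarrow> nat \<Rightarrow> nat \<Rightarrow> real) \<Rightarrow> real" where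
  "lp_value n K M s beta kappa f =
     Sup {lp_objective n K M f Q | X Q. lp_feasible n K M s beta kappa f X Q}"

end

theory Submission imports Defs begin

text \<open>Averaging over the other bidders' reports preserves every inequality that holds report by
  report; this makes each pointwise constraint on the auction (IC, VP, budget, size, NPT) into the
  corresponding LP constraint on the interim quantities. For IC with a lower reported budget
  \<open>t < m\<close>, the misreport's price is at most \<open>beta t \<le> beta m\<close>, so its utility under the true
  budget is finite and the inequality of utilities is one of real numbers. Summing the interim
  quantities against the prior recovers ex-ante expectations, so the allocation constraint
  follows from \<open>\<Sum>i x i p \<le> 1\<close> and the objective equals the expected revenue.\<close>

lemma prof_prob_nonneg:
  assumes "\<And>i k m. i < n \<Longrightarrow> k \<le> K \<Longrightarrow> m \<le> M \<Longrightarrow> f i k m \<ge> 0"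
    and "I \<subseteq> {..<n}" and "q \<in> PiE I (\<lambda>_. types K M)"
  shows "prof_prob f I q \<ge> 0"
  unfolding prof_prob_def using assms
  by (intro prod_nonneg) (force simp: types_def PiE_def Pi_def)

lemma sum_prof_prob_eq_1:
  assumes "\<And>i. i < n \<Longrightarrow> (\<Sum>k\<le>K. \<Sum>m\<le>M. f i k m) = 1"
    and "I \<subseteq> {..<n}"
  shows "(\<Sum>q\<in>PiE I (\<lambda>_. types K M). prof_prob f I q) = 1"
proof -
  have marginal: "(\<Sum>y\<in>types K M. f j (fst y) (snd y)) = 1" if "j \<in> I" for j
    using assms that by (auto simp: types_def sum.cartesian_product split_def)
  have "finite I" using assms(2) finite_subset by blast
  then have "(\<Sum>q\<in>PiE I (\<lambda>_. types K M). prof_prob f I q)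
      = (\<Prod>j\<in>I. \<Sum>y\<in>types K M. f j (fst y) (snd y))"
    unfolding prof_prob_def by (subst prod_sum_PiE) (auto simp: types_def)
  also have "\<dots> = 1" using marginal by simp
  finally show ?thesis .
qed

lemma fun_upd_in_profiles:
  assumes "i < n" "q \<in> others n K M i" "k \<le> K" "m \<le> M"
  shows "q(i := (k, m)) \<in> profiles n K M"
proof -
  have "q(i := (k, m)) \<in> PiE (insert i ({..<n} - {i})) (\<lambda>_. types K M)"
    using assms by (intro PiE_fun_upd) (auto simp: types_def others_def)
  moreover have "insert i ({..<n} - {i}) = {..<n}" using assms(1) by auto
  ultimately show ?thesis by (simp add: profiles_def)
qed

lemma expectation_eq_sum_interim:
  assumes "i < n"
  shows "(\<Sum>p\<in>profiles n K M. prof_prob f {..<n} p * g i p)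
       = (\<Sum>k\<le>K. \<Sum>m\<le>M. f i k m * interim n K M f g i k m)"
proof -
  let ?A = "{..<n} - {i}"
  let ?T = "\<lambda>_::nat. types K M"
  have split_prob: "prof_prob f (insert i ?A) (q(i := y)) = f i (fst y) (snd y) * prof_prob f ?A q"
    for q y unfolding prof_prob_def by (subst prod.insert) (auto intro!: prod.cong)
  have "{..<n} = insert i ?A" using assms by auto
  then have "(\<Sum>p\<in>profiles n K M. prof_prob f {..<n} p * g i p)
      = (\<Sum>p\<in>PiE (insert i ?A) ?T. prof_prob f (insert i ?A) p * g i p)"
    unfolding profiles_def by simp
  also have "\<dots> = (\<Sum>(y, q)\<in>types K M \<times> PiE ?A ?T.
                    prof_prob f (insert i ?A) (q(i := y)) * g i (q(i := y)))"
    by (intro sum.reindex_bij_witness[of _ "\<lambda>(y, q). q(i := y)" "\<lambda>p. (p i, p(i := undefined))"])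
       (auto simp: PiE_def extensional_def)
  also have "\<dots> = (\<Sum>y\<in>types K M. f i (fst y) (snd y) *
                    (\<Sum>q\<in>PiE ?A ?T. prof_prob f ?A q * g i (q(i := y))))"
    unfolding split_prob
    by (simp add: sum.cartesian_product[symmetric] sum_distrib_left mult.assoc del: insert_Diff_single)
  also have "\<dots> = (\<Sum>k\<le>K. \<Sum>m\<le>M. f i k m * interim n K M f g i k m)"
    unfolding types_def others_def interim_def by (simp add: sum.cartesian_product split_def)
  finally show ?thesis .
qed

lemma interim_diff_scaled:
  "interim n K M f (\<lambda>i p. c * g i p - h i p) i k m
     = c * interim n K M f g i k m - interim n K M f h i k m"
  unfolding interim_def
  by (simp add: sum_distrib_left right_diff_distrib sum_subtractf mult.left_commute)

lemma interim_const:
  assumes "\<And>i. i < n \<Longrightarrow> (\<Sum>k\<le>K. \<Sum>m\<le>M. f i k m) = 1" and "i < n"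
  shows "interim n K M f (\<lambda>_ _. c) i k m = c"
proof -
  have "(\<Sum>q\<in>others n K M i. prof_prob f ({..<n} - {i}) q) = 1"
    unfolding others_def using assms(1) by (rule sum_prof_prob_eq_1) auto
  then show ?thesis unfolding interim_def by (simp add: sum_distrib_right[symmetric])
qed

lemma interim_mono:
  assumes "\<And>i k m. i < n \<Longrightarrow> k \<le> K \<Longrightarrow> m \<le> M \<Longrightarrow> f i k m \<ge> 0"
    and "\<And>q. q \<in> others n K M i \<Longrightarrow> g i (q(i := (k, m))) \<le> h i (q(i := (l, t)))"
  shows "interim n K M f g i k m \<le> interim n K M f h i l t"
  unfolding interim_def
proof (intro sum_mono mult_left_mono)
  fix q assume "q \<in> others n K M i"
  then show "prof_prob f ({..<n} - {i}) q \<ge> 0"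
    using assms(1) by (intro prof_prob_nonneg[where n = n]) (auto simp: others_def)
qed (use assms(2) in auto)

lemma interim_bounds:
  fixes c d :: real
  assumes "\<And>i k m. i < n \<Longrightarrow> k \<le> K \<Longrightarrow> m \<le> M \<Longrightarrow> f i k m \<ge> 0"
    and "\<And>i. i < n \<Longrightarrow> (\<Sum>k\<le>K. \<Sum>m\<le>M. f i k m) = 1" and "i < n"
    and "\<And>q. q \<in> others n K M i \<Longrightarrow> c \<le> g i (q(i := (k, m))) \<and> g i (q(i := (k, m))) \<le> d"
  shows "c \<le> interim n K M f g i k m \<and> interim n K M f g i k m \<le> d"
proof -
  have "interim n K M f (\<lambda>_ _. c) i k m \<le> interim n K M f g i k m"
  proof (rule interim_mono[where g = "\<lambda>_ _. c" and h = g, OF assms(1)])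
    fix q assume "q \<in> others n K M i"
    from assms(4)[OF this] show "c \<le> g i (q(i := (k, m)))" by (rule conjunct1)
  qed
  moreover have "interim n K M f g i k m \<le> interim n K M f (\<lambda>_ _. d) i k m"
  proof (rule interim_mono[where g = g and h = "\<lambda>_ _. d", OF assms(1)])
    fix q assume "q \<in> others n K M i"
    from assms(4)[OF this] show "g i (q(i := (k, m))) \<le> d" by (rule conjunct2)
  qed
  ultimately show ?thesis using interim_const[OF assms(2,3)] by simp
qed

lemma utility_within_budget:
  "p \<le> beta m \<Longrightarrow> utility s beta k m a p = ereal (s k * a - p)"
  by (simp add: utility_def)

lemma strict_mono_on_from_1_le:
  fixes beta :: "nat \<Rightarrow> real"
  assumes "beta 0 \<le> beta 1" and "strict_mono_on {1..M} beta" and "t \<le> m" and "m \<le> M"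
  shows "beta t \<le> beta m"
proof (cases "t = 0")
  case True
  show ?thesis
  proof (cases "m = 0")
    case False
    then have "beta 1 \<le> beta m" using assms(4) by (intro strict_mono_on_leD[OF assms(2)]) auto
    with True assms(1) show ?thesis by simp
  qed (use True in simp)
next
  case False
  with assms(3,4) show ?thesis by (intro strict_mono_on_leD[OF assms(2)]) auto
qed

lemma lp_objective_le_lp_value:
  assumes "\<And>i k m. i < n \<Longrightarrow> k \<le> K \<Longrightarrow> m \<le> M \<Longrightarrow> f i k m \<ge> 0"
    and "lp_feasible n K M s beta kappa f X Q"
  shows "lp_objective n K M f Q \<le> lp_value n K M s beta kappa f"
proof -
  have "bdd_above {lp_objective n K M f Q | X Q. lp_feasible n K M s beta kappa f X Q}"
  proof (rule bdd_aboveI, clarify)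
    fix X Q assume "lp_feasible n K M s beta kappa f X Q"
    then show "lp_objective n K M f Q \<le> (\<Sum>i<n. \<Sum>k\<le>K. \<Sum>m\<le>M. f i k m * beta m)"
      unfolding lp_objective_def using assms(1)
      by (intro sum_mono mult_left_mono) (auto simp: lp_feasible_def)
  qed
  then show ?thesis unfolding lp_value_def using assms(2) by (intro cSup_upper) blast+
qed

locale budgeted_auction =
  fixes n K M :: nat
    and s beta kappa :: "nat \<Rightarrow> real"
    and f :: "nat \<Rightarrow> nat \<Rightarrow> nat \<Rightarrow> real"
    and x P :: "nat \<Rightarrow> profile \<Rightarrow> real"
  assumes b01: "beta 0 \<le> beta 1" and b_mono: "strict_mono_on {1..M} beta"
    and f_nonneg: "\<And>i k m. i < n \<Longrightarrow> k \<le> K \<Longrightarrow> m \<le> M \<Longrightarrow> f i k m \<ge> 0"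
    and f_sum: "\<And>i. i < n \<Longrightarrow> (\<Sum>k\<le>K. \<Sum>m\<le>M. f i k m) = 1"
    and x_nonneg: "\<And>i p. i < n \<Longrightarrow> p \<in> profiles n K M \<Longrightarrow> x i p \<ge> 0"
    and x_total: "\<And>p. p \<in> profiles n K M \<Longrightarrow> (\<Sum>i<n. x i p) \<le> 1"
    and size: "\<And>i p. i < n \<Longrightarrow> p \<in> profiles n K M \<Longrightarrow> x i p \<le> kappa i"
    and budget: "\<And>i p. i < n \<Longrightarrow> p \<in> profiles n K M \<Longrightarrow> P i p \<le> beta (snd (p i))"
    and NPT: "\<And>i p. i < n \<Longrightarrow> p \<in> profiles n K M \<Longrightarrow> P i p \<ge> 0"
    and VP: "\<And>i p. i < n \<Longrightarrow> p \<in> profiles n K M \<Longrightarrow>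
               utility s beta (fst (p i)) (snd (p i)) (x i p) (P i p) \<ge> 0"
    and IC: "\<And>i p l t. i < n \<Longrightarrow> p \<in> profiles n K M \<Longrightarrow> l \<le> K \<Longrightarrow> t \<le> snd (p i) \<Longrightarrow>
               utility s beta (fst (p i)) (snd (p i)) (x i p) (P i p)
                 \<ge> utility s beta (fst (p i)) (snd (p i)) (x i (p(i := (l, t)))) (P i (p(i := (l, t))))"
begin

abbreviation "X \<equiv> interim n K M f x"
abbreviation "Q \<equiv> interim n K M f P"

lemma interim_allocation_le_1:
  "(\<Sum>i<n. \<Sum>k\<le>K. \<Sum>m\<le>M. f i k m * X i k m) \<le> 1"
proof -
  let ?pr = "prof_prob f {..<n}"
  have "(\<Sum>i<n. \<Sum>k\<le>K. \<Sum>m\<le>M. f i k m * X i k m) = (\<Sum>i<n. \<Sum>p\<in>profiles n K M. ?pr p * x i p)"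
    by (simp add: expectation_eq_sum_interim)
  also have "\<dots> = (\<Sum>p\<in>profiles n K M. ?pr p * (\<Sum>i<n. x i p))"
    by (subst sum.swap) (simp add: sum_distrib_left)
  also have "\<dots> \<le> (\<Sum>p\<in>profiles n K M. ?pr p)"
  proof (intro sum_mono mult_right_le_one_le)
    fix p assume p: "p \<in> profiles n K M"
    show "?pr p \<ge> 0"
      using p f_nonneg by (intro prof_prob_nonneg[where n = n]) (auto simp: profiles_def)
    show "0 \<le> (\<Sum>i<n. x i p)" using p by (intro sum_nonneg x_nonneg) auto
    show "(\<Sum>i<n. x i p) \<le> 1" using p x_total by simp
  qed
  also have "\<dots> = 1"
    unfolding profiles_def by (intro sum_prof_prob_eq_1[where n = n]) (use f_sum in auto)
  finally show ?thesis .
qed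

lemma interim_incentive_compatible:
  assumes "i < n" "k \<le> K" "l \<le> K" "m \<le> M" "t < m"
  shows "s k * X i l t - Q i l t \<le> s k * X i k m - Q i k m"
proof -
  have "s k * x i (q(i := (l, t))) - P i (q(i := (l, t))) \<le> s k * x i (q(i := (k, m))) - P i (q(i := (k, m)))"
    if q: "q \<in> others n K M i" for q
  proof -
    have p: "q(i := (k, m)) \<in> profiles n K M" and p': "q(i := (l, t)) \<in> profiles n K M"
      using fun_upd_in_profiles[OF assms(1) q] assms by auto
    have "P i (q(i := (l, t))) \<le> beta t" using budget[OF assms(1) p'] by simp
    also have "\<dots> \<le> beta m" using strict_mono_on_from_1_le[OF b01 b_mono] assms by simp
    finally show ?thesis
      using IC[OF assms(1) p assms(3), of t] budget[OF assms(1) p] assms(5)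
      by (simp add: utility_within_budget)
  qed
  then have "interim n K M f (\<lambda>i p. s k * x i p - P i p) i l t
           \<le> interim n K M f (\<lambda>i p. s k * x i p - P i p) i k m"
    by (intro interim_mono[OF f_nonneg])
  then show ?thesis by (simp add: interim_diff_scaled)
qed

lemma interim_voluntary_participation:
  assumes "i < n" "k \<le> K" "m \<le> M"
  shows "s k * X i k m - Q i k m \<ge> 0"
proof -
  have "0 \<le> s k * x i (q(i := (k, m))) - P i (q(i := (k, m)))" if q: "q \<in> others n K M i" for q
  proof -
    have p: "q(i := (k, m)) \<in> profiles n K M" using fun_upd_in_profiles[OF assms(1) q assms(2,3)] .
    show ?thesis using VP[OF assms(1) p] budget[OF assms(1) p] by (simp add: utility_within_budget)
  qed
  then have "interim n K M f (\<lambda>_ _. 0) i k m \<le> interim n K M f (\<lambda>i p. s k * x i p - P i p) i k m"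
    by (intro interim_mono[OF f_nonneg]) simp
  then have "0 \<le> interim n K M f (\<lambda>i p. s k * x i p - P i p) i k m"
    using interim_const[OF f_sum assms(1)] by simp
  then show ?thesis by (simp add: interim_diff_scaled)
qed

lemma interim_price_bounds:
  assumes "i < n" "k \<le> K" "m \<le> M"
  shows "0 \<le> Q i k m \<and> Q i k m \<le> beta m"
proof (rule interim_bounds[OF f_nonneg f_sum assms(1)])
  fix q assume "q \<in> others n K M i"
  then have p: "q(i := (k, m)) \<in> profiles n K M" using fun_upd_in_profiles assms by blast
  show "0 \<le> P i (q(i := (k, m))) \<and> P i (q(i := (k, m))) \<le> beta m"
    using NPT[OF assms(1) p] budget[OF assms(1) p] by simp
qed

lemma interim_allocation_bounds:
  assumes "i < n" "k \<le> K" "m \<le> M"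
  shows "0 \<le> X i k m \<and> X i k m \<le> kappa i"
proof (rule interim_bounds[OF f_nonneg f_sum assms(1)])
  fix q assume "q \<in> others n K M i"
  then have p: "q(i := (k, m)) \<in> profiles n K M" using fun_upd_in_profiles assms by blast
  show "0 \<le> x i (q(i := (k, m))) \<and> x i (q(i := (k, m))) \<le> kappa i"
    using x_nonneg[OF assms(1) p] size[OF assms(1) p] by simp
qed

lemma lp_feasible_interim: "lp_feasible n K M s beta kappa f X Q"
  unfolding lp_feasible_def
  using interim_allocation_le_1 interim_incentive_compatible interim_voluntary_participation
    interim_price_bounds interim_allocation_bounds
  by simp

lemma expected_revenue_eq_lp_objective:
  "expected_revenue n K M f P = lp_objective n K M f Q"
proof -
  have "expected_revenue n K M f P = (\<Sum>i<n. \<Sum>p\<in>profiles n K M. prof_prob f {..<n} p * P i p)"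
    unfolding expected_revenue_def by (subst sum.swap) (simp add: sum_distrib_left)
  also have "\<dots> = lp_objective n K M f Q"
    unfolding lp_objective_def by (simp add: expectation_eq_sum_interim)
  finally show ?thesis .
qed

end

theorem lemma7:
  fixes n K M :: nat
    and s beta kappa :: "nat \<Rightarrow> real"
    and f :: "nat \<Rightarrow> nat \<Rightarrow> nat \<Rightarrow> real"
    and x P :: "nat \<Rightarrow> profile \<Rightarrow> real"
  assumes s0: "s 0 = 0" and s01: "s 0 \<le> s 1" and s_mono: "strict_mono_on {1..K} s"
    and b0: "beta 0 = 0" and b01: "beta 0 \<le> beta 1" and b_mono: "strict_mono_on {1..M} beta"
    and f_nonneg: "\<And>i k m. i < n \<Longrightarrow> k \<le> K \<Longrightarrow> m \<le> M \<Longrightarrow> f i k m \<ge> 0"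
    and f_sum: "\<And>i. i < n \<Longrightarrow> (\<Sum>k\<le>K. \<Sum>m\<le>M. f i k m) = 1"
    and x_nonneg: "\<And>i p. i < n \<Longrightarrow> p \<in> profiles n K M \<Longrightarrow> x i p \<ge> 0"
    and x_total: "\<And>p. p \<in> profiles n K M \<Longrightarrow> (\<Sum>i<n. x i p) \<le> 1"
    and size: "\<And>i p. i < n \<Longrightarrow> p \<in> profiles n K M \<Longrightarrow> x i p \<le> kappa i"
    and budget: "\<And>i p. i < n \<Longrightarrow> p \<in> profiles n K M \<Longrightarrow> P i p \<le> beta (snd (p i))"
    and NPT: "\<And>i p. i < n \<Longrightarrow> p \<in> profiles n K M \<Longrightarrow> P i p \<ge> 0"
    and VP: "\<And>i p. i < n \<Longrightarrow> p \<in> profiles n K M \<Longrightarrow>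
               utility s beta (fst (p i)) (snd (p i)) (x i p) (P i p) \<ge> 0"
    and IC: "\<And>i p l t. i < n \<Longrightarrow> p \<in> profiles n K M \<Longrightarrow> l \<le> K \<Longrightarrow> t \<le> snd (p i) \<Longrightarrow>
               utility s beta (fst (p i)) (snd (p i)) (x i p) (P i p)
                 \<ge> utility s beta (fst (p i)) (snd (p i)) (x i (p(i := (l, t)))) (P i (p(i := (l, t))))"
  shows "lp_feasible n K M s beta kappa f (interim n K M f x) (interim n K M f P)
       \<and> expected_revenue n K M f P = lp_objective n K M f (interim n K M f P)
       \<and> expected_revenue n K M f P \<le> lp_value n K M s beta kappa f"
proof -
  interpret budgeted_auction n K M s beta kappa f x P
    by unfold_locales (rule assms; assumption)+
  show ?thesis
    using lp_feasible_interim expected_revenue_eq_lp_objective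
      lp_objective_le_lp_value[OF f_nonneg lp_feasible_interim]
    by simp
qed

end
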